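(* Let $\sigma(x)=1/(1+e^{-x})$, let $a,\gamma_n^*,B_n\ge1$, $\beta_n>0$, $K_n,L,r,n\in\mathbb{N}$, and let $f_{\mathbf{w}}$ be the network described in the context. Let $(X_1,Y_1),\dots,(X_n,Y_n)\in\mathbb{R}^d\times\mathbb{R}$ with $X_i\in[-a,a]^d$ and $|Y_i|\le\beta_n$ ($i=1,\dots,n$), and let $F_n(\mathbf{w})=\frac1n\sum_{i=1}^n|Y_i-f_{\mathbf{w}}(X_i)|^2$. Assume $K_n\gamma_n^*\ge\beta_n$ and that the weight vectors $\mathbf{w}_1,\mathbf{w}_2$ satisfy $\max\{|(\mathbf{w}_1)^{(L)}_{1,1,k}|,|(\mathbf{w}_2)^{(L)}_{1,1,k}|\}\le\gamma_n^*$ for $k=1,\dots,K_n$ and $\max\{|(\mathbf{w}_1)^{(l)}_{k,i,j}|,|(\mathbf{w}_2)^{(l)}_{k,i,j}|\}\le B_n$ for all $k,i,j$ and $l=1,\dots,L-1$. Then there is a constant $c_{15}>0$ depending only on $d,L,r,a$ such that $$\|(\nabla_{\mathbf{w}}F_n)(\mathbf{w}_1)-(\nabla_{\mathbf{w}}F_n)(\mathbf{w}_2)\|\le c_{15}\,K_n^{3/2}B_n^{2L}(\gamma_n^* )^2\|\mathbf{w}_1-\mathbf{w}_2\|.$$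
   Context: For a weight vector $\mathbf{w}$, $f_{\mathbf{w}}(x)=\sum_{j=1}^{K_n}w^{(L)}_{1,1,j}f^{(L)}_{j,1}(x)$, where for $k\in\{1,\dots,K_n\}$, $i\in\{1,\dots,r\}$: $f^{(l)}_{k,i}(x)=\sigma\big(\sum_{j=1}^rw^{(l-1)}_{k,i,j}f^{(l-1)}_{k,j}(x)+w^{(l-1)}_{k,i,0}\big)$ for $l=2,\dots,L$ and $f^{(1)}_{k,i}(x)=\sigma\big(\sum_{j=1}^dw^{(0)}_{k,i,j}x^{(j)}+w^{(0)}_{k,i,0}\big)$. $\|\cdot\|$ is the Euclidean norm. *)

theory Defs
  imports "HOL-Analysis.Analysis"
begin

definition sigmoid :: "real \<Rightarrow> real" where
  "sigmoid x = 1 / (1 + exp (- x))"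

text \<open>A weight vector is a function on indices (l,k,i,j), meaning w^{(l)}_{k,i,j}.
  Only the indices in nn_index d L r K are used by the network.\<close>
type_synonym weights = "nat \<times> nat \<times> nat \<times> nat \<Rightarrow> real"

definition nn_index :: "nat \<Rightarrow> nat \<Rightarrow> nat \<Rightarrow> nat \<Rightarrow> (nat \<times> nat \<times> nat \<times> nat) set" where
  "nn_index d L r K =
     {(0, k, i, j) | k i j. k \<in> {1..K} \<and> i \<in> {1..r} \<and> j \<in> {0..d}}
   \<union> {(l, k, i, j) | l k i j. l \<in> {1..L-1} \<and> k \<in> {1..K} \<and> i \<in> {1..r} \<and> j \<in> {0..r}}
   \<union> {(L, 1, 1, j) | j. j \<in> {1..K}}"

text \<open>Hidden neuron values: nn_layer d r w x l k i = f^{(l)}_{k,i}(x) for l \<ge> 1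
  (the value for l = 0 is an unused dummy). The input x has coordinates x 1, ..., x d.\<close>
fun nn_layer :: "nat \<Rightarrow> nat \<Rightarrow> weights \<Rightarrow> (nat \<Rightarrow> real) \<Rightarrow> nat \<Rightarrow> nat \<Rightarrow> nat \<Rightarrow> real" where
  "nn_layer d r w x 0 k i = 0"
| "nn_layer d r w x (Suc 0) k i =
     sigmoid ((\<Sum>j=1..d. w (0, k, i, j) * x j) + w (0, k, i, 0))"
| "nn_layer d r w x (Suc (Suc l)) k i =
     sigmoid ((\<Sum>j=1..r. w (Suc l, k, i, j) * nn_layer d r w x (Suc l) k j) + w (Suc l, k, i, 0))"

definition nn_net :: "nat \<Rightarrow> nat \<Rightarrow> nat \<Rightarrow> nat \<Rightarrow> weights \<Rightarrow> (nat \<Rightarrow> real) \<Rightarrow> real" where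
  "nn_net d L r K w x = (\<Sum>j=1..K. w (L, 1, 1, j) * nn_layer d r w x L j 1)"

definition emp_risk :: "nat \<Rightarrow> nat \<Rightarrow> nat \<Rightarrow> nat \<Rightarrow> nat \<Rightarrow> (nat \<Rightarrow> nat \<Rightarrow> real) \<Rightarrow> (nat \<Rightarrow> real)
                        \<Rightarrow> weights \<Rightarrow> real" where
  "emp_risk d L r K n X Y w = (1 / real n) * (\<Sum>i=1..n. \<bar>Y i - nn_net d L r K w (X i)\<bar>^2)"

definition grad_w :: "(weights \<Rightarrow> real) \<Rightarrow> weights \<Rightarrow> (nat \<times> nat \<times> nat \<times> nat) \<Rightarrow> real" where
  "grad_w F w idx = deriv (\<lambda>t. F (w(idx := t))) (w idx)"

definition wnorm :: "(nat \<times> nat \<times> nat \<times> nat) set \<Rightarrow> weights \<Rightarrow> real" where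
  "wnorm I v = sqrt (\<Sum>idx\<in>I. (v idx)^2)"

end

theory Submission
  imports Defs
begin

(* Each coordinate of the gradient of the empirical risk is 2/n times a sum of the terms
   (f_w(X_i) - Y_i) * df_w(X_i)/dw_idx, and the derivative of the network with respect to a single
   weight is computed by forward differentiation through the layers. Since sigma and
   sigma' = sigma (1 - sigma) are bounded by 1 and 1-Lipschitz, an induction over the layers shows:
   if C dominates d a + 1 and 2 (2 r + 1) B, and D bounds the coordinatewise distance of w1 and w2,
   then the pre-activations of layer l differ by at most C^(l+1) D, their derivatives are bounded by
   C^(l+1) and differ by at most C^(2l+1) D. A weight influences only its own subnetwork, so df_w/dw_idx
   is bounded by 2 gamma C^L and changes by at most 4 gamma C^(2L) D, with no factor K, whereas f_w
   itself is only bounded by K gamma. Hence each gradient coordinate changes by at most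
   24 K gamma^2 C^(2L) D, and the O(K) coordinates give the factor K^(3/2). Finally take
   C = 2 (d + 2 r + 1) a B and D = |w1 - w2|. *)

lemma abs_sum_le_card_mult:
  fixes g :: "'a \<Rightarrow> real"
  assumes "\<And>j. j \<in> A \<Longrightarrow> \<bar>g j\<bar> \<le> c"
  shows "\<bar>sum g A\<bar> \<le> real (card A) * c"
  using order_trans[OF sum_abs sum_bounded_above[of A "\<lambda>j. \<bar>g j\<bar>" c]] assms by simp

lemma abs_sum_le_single:
  fixes g :: "'a \<Rightarrow> real"
  assumes "finite A" and "\<And>k. k \<in> A \<Longrightarrow> k \<noteq> q \<Longrightarrow> g k = 0"
    and "q \<in> A \<Longrightarrow> \<bar>g q\<bar> \<le> c" and "0 \<le> c"
  shows "\<bar>sum g A\<bar> \<le> c"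
proof -
  have "sum g A = (\<Sum>k\<in>A. if k = q then g q else 0)"
    using assms(2) by (intro sum.cong) auto
  then show ?thesis
    using assms(1,3,4) by simp
qed

lemma abs_mult_diff_le:
  fixes a1 a2 b1 b2 :: real
  assumes "\<bar>a1 - a2\<bar> \<le> e1" "\<bar>b1\<bar> \<le> m1" "\<bar>a2\<bar> \<le> m2" "\<bar>b1 - b2\<bar> \<le> e2"
  shows "\<bar>a1 * b1 - a2 * b2\<bar> \<le> e1 * m1 + m2 * e2"
proof -
  have "\<bar>a1 * b1 - a2 * b2\<bar> = \<bar>(a1 - a2) * b1 + a2 * (b1 - b2)\<bar>"
    by (simp add: algebra_simps)
  also have "\<dots> \<le> \<bar>a1 - a2\<bar> * \<bar>b1\<bar> + \<bar>a2\<bar> * \<bar>b1 - b2\<bar>"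
    by (metis abs_mult abs_triangle_ineq)
  also have "\<dots> \<le> e1 * m1 + m2 * e2"
    using assms by (intro add_mono mult_mono) auto
  finally show ?thesis .
qed

lemma abs_add_diff_le:
  fixes a1 a2 b1 b2 :: real
  assumes "\<bar>a1 - a2\<bar> \<le> e" and "\<bar>b1 - b2\<bar> \<le> f" and "e + f \<le> g"
  shows "\<bar>(a1 + b1) - (a2 + b2)\<bar> \<le> g"
  using assms abs_triangle_ineq[of "a1 - a2" "b1 - b2"] by (simp add: algebra_simps)

lemma abs_affine_sum_le:
  fixes g :: "nat \<Rightarrow> real"
  assumes "1 \<le> B" and "\<And>j. j \<in> {1..r} \<Longrightarrow> \<bar>g j\<bar> \<le> u + B * v" and "\<bar>c\<bar> \<le> u" and "u \<le> v"
  shows "\<bar>(\<Sum>j=1..r. g j) + c\<bar> \<le> (2 * real r + 1) * B * v"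
proof -
  have "u \<le> B * v"
    using assms(1,3,4) by (metis abs_ge_zero mult_right_mono mult_1 order_trans)
  have "\<bar>(\<Sum>j=1..r. g j) + c\<bar> \<le> real r * (u + B * v) + u"
    using abs_sum_le_card_mult[of "{1..r}" g, OF assms(2)] assms(3) abs_triangle_ineq[of "sum g {1..r}" c]
    by simp
  also have "\<dots> \<le> real r * (B * v + B * v) + B * v"
    using \<open>u \<le> B * v\<close> assms(1) by (intro add_mono mult_left_mono) simp_all
  finally show ?thesis
    by (simp add: algebra_simps)
qed

lemma abs_affine_sum_diff_le:
  fixes g1 g2 :: "nat \<Rightarrow> real"
  assumes "1 \<le> B" and "\<And>j. j \<in> {1..r} \<Longrightarrow> \<bar>g1 j - g2 j\<bar> \<le> u + B * v"
    and "\<bar>c1 - c2\<bar> \<le> u" and "u \<le> v"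
  shows "\<bar>((\<Sum>j=1..r. g1 j) + c1) - ((\<Sum>j=1..r. g2 j) + c2)\<bar> \<le> (2 * real r + 1) * B * v"
proof -
  have "((\<Sum>j=1..r. g1 j) + c1) - ((\<Sum>j=1..r. g2 j) + c2) = (\<Sum>j=1..r. g1 j - g2 j) + (c1 - c2)"
    by (simp add: sum_subtractf)
  then show ?thesis
    using abs_affine_sum_le[of B r "\<lambda>j. g1 j - g2 j" u v "c1 - c2"] assms by simp
qed

section \<open>The logistic function\<close>

definition sigmoid' :: "real \<Rightarrow> real" where
  "sigmoid' x = sigmoid x * (1 - sigmoid x)"

lemma sigmoid_pos: "0 < sigmoid x"
  unfolding sigmoid_def by (simp add: add_pos_pos)

lemma sigmoid_less_1: "sigmoid x < 1"
  unfolding sigmoid_def by (simp add: add_pos_pos)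

lemma abs_sigmoid_le_1: "\<bar>sigmoid x\<bar> \<le> 1"
  using sigmoid_pos[of x] sigmoid_less_1[of x] by simp

lemma abs_sigmoid'_le_1: "\<bar>sigmoid' x\<bar> \<le> 1"
  using sigmoid_pos[of x] sigmoid_less_1[of x]
  unfolding sigmoid'_def by (simp add: abs_mult mult_le_one)

lemma DERIV_sigmoid: "(sigmoid has_real_derivative sigmoid' x) (at x)"
proof -
  have nz: "1 + exp (- x) \<noteq> 0"
    by (metis add_pos_pos exp_gt_zero less_irrefl zero_less_one)
  have "((\<lambda>x. 1 / (1 + exp (- x))) has_real_derivative exp (- x) / (1 + exp (- x))\<^sup>2) (at x)"
    by (auto intro!: derivative_eq_intros simp: nz power2_eq_square)
  moreover have "exp (- x) / (1 + exp (- x))\<^sup>2 = sigmoid' x"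
    unfolding sigmoid'_def sigmoid_def using nz by (simp add: field_simps power2_eq_square)
  ultimately show ?thesis
    unfolding sigmoid_def[abs_def] by simp
qed

lemma DERIV_sigmoid': "(sigmoid' has_real_derivative sigmoid' x * (1 - 2 * sigmoid x)) (at x)"
proof -
  have "((\<lambda>x. sigmoid x * (1 - sigmoid x)) has_real_derivative
      sigmoid' x * (1 - sigmoid x) - sigmoid x * sigmoid' x) (at x)"
    by (auto intro!: derivative_eq_intros DERIV_sigmoid)
  then show ?thesis
    unfolding sigmoid'_def[abs_def] by (simp add: algebra_simps)
qed

lemma sigmoid_lipschitz: "\<bar>sigmoid x - sigmoid y\<bar> \<le> \<bar>x - y\<bar>"
  using field_differentiable_bound[OF convex_UNIV, of sigmoid sigmoid' 1]
  by (simp add: DERIV_sigmoid abs_sigmoid'_le_1)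

lemma sigmoid'_lipschitz: "\<bar>sigmoid' x - sigmoid' y\<bar> \<le> \<bar>x - y\<bar>"
proof -
  have "\<bar>1 - 2 * sigmoid z\<bar> \<le> 1" for z
    using sigmoid_pos[of z] sigmoid_less_1[of z] by simp
  then have "\<bar>sigmoid' z * (1 - 2 * sigmoid z)\<bar> \<le> 1" for z
    using abs_sigmoid'_le_1[of z] by (simp add: abs_mult mult_le_one)
  then show ?thesis
    using field_differentiable_bound[OF convex_UNIV, of sigmoid' "\<lambda>z. sigmoid' z * (1 - 2 * sigmoid z)" 1]
    by (simp add: DERIV_sigmoid')
qed

lemma abs_sigmoid'_mult_le:
  assumes "\<bar>u\<bar> \<le> c"
  shows "\<bar>sigmoid' z * u\<bar> \<le> c"
proof -
  have "\<bar>sigmoid' z\<bar> * \<bar>u\<bar> \<le> 1 * c"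
    using assms abs_sigmoid'_le_1 by (intro mult_mono) auto
  then show ?thesis
    by (simp add: abs_mult)
qed

lemma in_nn_index_input: "k \<in> {1..K} \<Longrightarrow> i \<in> {1..r} \<Longrightarrow> j \<le> d \<Longrightarrow> (0, k, i, j) \<in> nn_index d L r K"
  unfolding nn_index_def by auto

lemma in_nn_index_hidden:
  "Suc l < L \<Longrightarrow> k \<in> {1..K} \<Longrightarrow> i \<in> {1..r} \<Longrightarrow> j \<le> r \<Longrightarrow> (Suc l, k, i, j) \<in> nn_index d L r K"
  unfolding nn_index_def by auto

lemma in_nn_index_output: "k \<in> {1..K} \<Longrightarrow> (L, 1, 1, k) \<in> nn_index d L r K"
  unfolding nn_index_def by auto

lemma nn_index_eq:
  "nn_index d L r K =
     (\<lambda>(k, i, j). (0, k, i, j)) ` ({1..K} \<times> {1..r} \<times> {0..d})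
     \<union> {1..L-1} \<times> {1..K} \<times> {1..r} \<times> {0..r}
     \<union> (\<lambda>j. (L, 1, 1, j)) ` {1..K}"
  unfolding nn_index_def by auto

lemma finite_nn_index: "finite (nn_index d L r K)"
  unfolding nn_index_eq by simp

lemma card_nn_index_le: "card (nn_index d L r K) \<le> (r * (d + 1) + (L - 1) * r * (r + 1) + 1) * K"
proof -
  have "card (nn_index d L r K) \<le> card ((\<lambda>(k, i, j). (0::nat, k, i, j)) ` ({1..K} \<times> {1..r} \<times> {0..d}))
      + card ({1..L-1} \<times> {1..K} \<times> {1..r} \<times> {0..r}) + card ((\<lambda>j. (L, 1::nat, 1::nat, j)) ` {1..K})"
    unfolding nn_index_eq by (rule order_trans[OF card_Un_le add_right_mono[OF card_Un_le]])
  also have "\<dots> \<le> card ({1..K} \<times> {1..r} \<times> {0..d}) + card ({1..L-1} \<times> {1..K} \<times> {1..r} \<times> {0..r})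
      + card {1..K}"
    by (intro add_mono card_image_le) auto
  also have "\<dots> = (r * (d + 1) + (L - 1) * r * (r + 1) + 1) * K"
  proof -
    \<comment> \<open>abstracting L - 1 keeps simp from splitting the truncated subtraction\<close>
    obtain m where m: "L - 1 = m"
      by simp
    show ?thesis
      unfolding m by (simp add: card_cartesian_product algebra_simps)
  qed
  finally show ?thesis .
qed

lemma wnorm_eq_L2_set: "wnorm I v = L2_set v I"
  unfolding wnorm_def L2_set_def ..

lemma wnorm_nonneg: "0 \<le> wnorm I v"
  unfolding wnorm_eq_L2_set by simp

lemma abs_le_wnorm: "finite I \<Longrightarrow> idx \<in> I \<Longrightarrow> \<bar>v idx\<bar> \<le> wnorm I v"
  using member_le_L2_set[of I idx "\<lambda>i. \<bar>v i\<bar>"] unfolding wnorm_eq_L2_set L2_set_def by simp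

lemma wnorm_le_sqrt_card_mult:
  assumes "\<And>idx. idx \<in> I \<Longrightarrow> \<bar>v idx\<bar> \<le> M"
  shows "wnorm I v \<le> sqrt (real (card I)) * M"
proof (cases "I = {}")
  case False
  then have "0 \<le> M"
    using assms by force
  have "L2_set (\<lambda>i. \<bar>v i\<bar>) I \<le> L2_set (\<lambda>_. M) I"
    by (rule L2_set_mono) (use assms in auto)
  then show ?thesis
    using \<open>0 \<le> M\<close> unfolding wnorm_eq_L2_set L2_set_constant by (simp add: L2_set_def)
qed (simp add: wnorm_def)

section \<open>Derivatives of the network\<close>

fun nn_preact :: "nat \<Rightarrow> nat \<Rightarrow> weights \<Rightarrow> (nat \<Rightarrow> real) \<Rightarrow> nat \<Rightarrow> nat \<Rightarrow> nat \<Rightarrow> real" where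
  "nn_preact d r w x 0 k i = (\<Sum>j=1..d. w (0, k, i, j) * x j) + w (0, k, i, 0)"
| "nn_preact d r w x (Suc l) k i =
     (\<Sum>j=1..r. w (Suc l, k, i, j) * nn_layer d r w x (Suc l) k j) + w (Suc l, k, i, 0)"

lemma nn_layer_Suc: "nn_layer d r w x (Suc l) k i = sigmoid (nn_preact d r w x l k i)"
  by (cases l) simp_all

lemma abs_nn_layer_le_1: "\<bar>nn_layer d r w x l k i\<bar> \<le> 1"
  by (cases l) (simp_all add: nn_layer_Suc abs_sigmoid_le_1)

fun nn_preact_deriv ::
  "nat \<Rightarrow> nat \<Rightarrow> nat \<times> nat \<times> nat \<times> nat \<Rightarrow> weights \<Rightarrow> (nat \<Rightarrow> real) \<Rightarrow> nat \<Rightarrow> nat \<Rightarrow> nat \<Rightarrow> real" where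
  "nn_preact_deriv d r idx w x 0 k i =
     (\<Sum>j=1..d. of_bool ((0, k, i, j) = idx) * x j) + of_bool ((0, k, i, 0) = idx)"
| "nn_preact_deriv d r idx w x (Suc l) k i =
     (\<Sum>j=1..r. of_bool ((Suc l, k, i, j) = idx) * nn_layer d r w x (Suc l) k j
        + w (Suc l, k, i, j) * (sigmoid' (nn_preact d r w x l k j) * nn_preact_deriv d r idx w x l k j))
     + of_bool ((Suc l, k, i, 0) = idx)"

text \<open>The derivative of nn_layer d r w x (Suc l) k i (note the index shift).\<close>
definition nn_layer_deriv ::
  "nat \<Rightarrow> nat \<Rightarrow> nat \<times> nat \<times> nat \<times> nat \<Rightarrow> weights \<Rightarrow> (nat \<Rightarrow> real) \<Rightarrow> nat \<Rightarrow> nat \<Rightarrow> nat \<Rightarrow> real" where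
  "nn_layer_deriv d r idx w x l k i = sigmoid' (nn_preact d r w x l k i) * nn_preact_deriv d r idx w x l k i"

lemma nn_preact_deriv_Suc:
  "nn_preact_deriv d r idx w x (Suc l) k i =
     (\<Sum>j=1..r. of_bool ((Suc l, k, i, j) = idx) * nn_layer d r w x (Suc l) k j
        + w (Suc l, k, i, j) * nn_layer_deriv d r idx w x l k j)
     + of_bool ((Suc l, k, i, 0) = idx)"
  by (simp add: nn_layer_deriv_def)

lemma has_real_derivative_fun_upd: "((\<lambda>t. (w(idx := t)) p) has_real_derivative of_bool (p = idx)) (at y)"
  by (cases "p = idx") (auto intro!: derivative_eq_intros)

lemma has_real_derivative_nn_layer:
  assumes "((\<lambda>t. nn_preact d r (w(idx := t)) x l k i) has_real_derivative D) (at (w idx))"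
  shows "((\<lambda>t. nn_layer d r (w(idx := t)) x (Suc l) k i) has_real_derivative
           sigmoid' (nn_preact d r w x l k i) * D) (at (w idx))"
  using DERIV_chain'[OF assms DERIV_sigmoid] by (simp only: nn_layer_Suc fun_upd_triv)

lemma has_real_derivative_nn_preact:
  "((\<lambda>t. nn_preact d r (w(idx := t)) x l k i) has_real_derivative nn_preact_deriv d r idx w x l k i)
     (at (w idx))"
proof (induction l arbitrary: i)
  case 0
  show ?case
    unfolding nn_preact.simps nn_preact_deriv.simps
    by (intro DERIV_add DERIV_sum DERIV_cmult_right has_real_derivative_fun_upd)
next
  case (Suc l)
  have "((\<lambda>t. (w(idx := t)) (Suc l, k, i, j) * nn_layer d r (w(idx := t)) x (Suc l) k j)
      has_real_derivative of_bool ((Suc l, k, i, j) = idx) * nn_layer d r w x (Suc l) k j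
        + w (Suc l, k, i, j) * (sigmoid' (nn_preact d r w x l k j) * nn_preact_deriv d r idx w x l k j))
      (at (w idx))" for j
    by (rule DERIV_cong[OF DERIV_mult[OF has_real_derivative_fun_upd has_real_derivative_nn_layer[OF Suc.IH]]])
      (simp add: algebra_simps)
  then show ?case
    unfolding nn_preact.simps nn_preact_deriv.simps
    by (intro DERIV_add DERIV_sum has_real_derivative_fun_upd)
qed

text \<open>Only the q-th subnetwork depends on the weight (p, q, s, t); this keeps the factor K out of
  the bounds on the derivative of the network.\<close>
lemma nn_preact_deriv_other_subnet: "k \<noteq> q \<Longrightarrow> nn_preact_deriv d r (p, q, s, t) w x l k i = 0"
  by (induction l arbitrary: i) auto

definition nn_net_deriv ::
  "nat \<Rightarrow> nat \<Rightarrow> nat \<Rightarrow> nat \<Rightarrow> nat \<times> nat \<times> nat \<times> nat \<Rightarrow> weights \<Rightarrow> (nat \<Rightarrow> real) \<Rightarrow> real" where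
  "nn_net_deriv d L r K idx w x =
     (\<Sum>k=1..K. of_bool ((L, 1, 1, k) = idx) * nn_layer d r w x L k 1)
     + (\<Sum>k=1..K. w (L, 1, 1, k) * nn_layer_deriv d r idx w x (L - 1) k 1)"

lemma has_real_derivative_nn_net:
  assumes "1 \<le> L"
  shows "((\<lambda>t. nn_net d L r K (w(idx := t)) x) has_real_derivative nn_net_deriv d L r K idx w x)
           (at (w idx))"
proof -
  have L: "L = Suc (L - 1)"
    using assms by simp
  show ?thesis
    unfolding nn_net_def nn_net_deriv_def nn_layer_deriv_def sum.distrib[symmetric]
    by (subst (1 2) L, intro DERIV_sum, rule DERIV_cong[OF DERIV_mult[OF has_real_derivative_fun_upd
        has_real_derivative_nn_layer[OF has_real_derivative_nn_preact]]]) (simp add: algebra_simps)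
qed

lemma grad_emp_risk:
  assumes "1 \<le> L"
  shows "grad_w (emp_risk d L r K n X Y) w idx =
           2 / real n * (\<Sum>i=1..n. (nn_net d L r K w (X i) - Y i) * nn_net_deriv d L r K idx w (X i))"
  unfolding grad_w_def
proof (rule DERIV_imp_deriv)
  have "((\<lambda>t. (1 / real n) * (\<Sum>i=1..n. (Y i - nn_net d L r K (w(idx := t)) (X i))\<^sup>2)) has_real_derivative
      (1 / real n) * (\<Sum>i=1..n. real 2 * ((0 - nn_net_deriv d L r K idx w (X i))
        * (Y i - nn_net d L r K (w(idx := w idx)) (X i)) ^ (2 - Suc 0)))) (at (w idx))"
    by (intro DERIV_cmult DERIV_sum DERIV_power DERIV_diff DERIV_const has_real_derivative_nn_net assms)
  then show "((\<lambda>t. emp_risk d L r K n X Y (w(idx := t))) has_real_derivative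
      2 / real n * (\<Sum>i=1..n. (nn_net d L r K w (X i) - Y i) * nn_net_deriv d L r K idx w (X i)))
      (at (w idx))"
    unfolding emp_risk_def by (simp add: sum_distrib_left algebra_simps)
qed

section \<open>Perturbation bounds\<close>

locale bounded_weight_pair =
  fixes d L r K :: nat and a B C D :: real and x :: "nat \<Rightarrow> real" and w1 w2 :: weights
  assumes B_ge_1: "1 \<le> B" and D_nonneg: "0 \<le> D"
    and C_ge_input: "real d * a + 1 \<le> C" and C_ge_hidden: "2 * (2 * real r + 1) * B \<le> C"
    and input_bound: "\<And>j. j \<in> {1..d} \<Longrightarrow> \<bar>x j\<bar> \<le> a"
    and hidden_bound: "\<And>w l k i j. w \<in> {w1, w2} \<Longrightarrow> l \<in> {1..L-1} \<Longrightarrow> k \<in> {1..K} \<Longrightarrow> i \<in> {1..r}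
                         \<Longrightarrow> j \<in> {0..r} \<Longrightarrow> \<bar>w (l, k, i, j)\<bar> \<le> B"
    and weight_dist: "\<And>idx. idx \<in> nn_index d L r K \<Longrightarrow> \<bar>w1 idx - w2 idx\<bar> \<le> D"
begin

lemma hidden_factor_le_C: "(2 * real r + 1) * B \<le> C"
proof -
  have "0 \<le> (2 * real r + 1) * B"
    using B_ge_1 by simp
  then show ?thesis
    using C_ge_hidden by linarith
qed

lemma one_le_C: "1 \<le> C"
proof -
  have "1 * 1 \<le> (2 * real r + 1) * B"
    using B_ge_1 by (intro mult_mono) auto
  then show ?thesis
    using hidden_factor_le_C by linarith
qed

lemma one_le_C_power: "1 \<le> C ^ n"
  using one_le_C by (rule one_le_power)

lemma C_power_nonneg: "0 \<le> C ^ n"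
  using one_le_C_power[of n] by simp

lemma C_power_mult_mono: "m \<le> n \<Longrightarrow> C ^ m * D \<le> C ^ n * D"
  using D_nonneg one_le_C by (intro mult_right_mono power_increasing)

lemma abs_input_affine_le:
  assumes "\<And>j. j \<in> {1..d} \<Longrightarrow> \<bar>c j\<bar> \<le> e" and "\<bar>c 0\<bar> \<le> e"
  shows "\<bar>(\<Sum>j=1..d. c j * x j) + c 0\<bar> \<le> C * e"
proof -
  have "\<bar>c j * x j\<bar> \<le> e * a" if "j \<in> {1..d}" for j
    using assms(1)[OF that] input_bound[OF that] by (simp add: abs_mult mult_mono')
  then have "\<bar>\<Sum>j=1..d. c j * x j\<bar> \<le> real d * (e * a)"
    using abs_sum_le_card_mult[of "{1..d}" "\<lambda>j. c j * x j" "e * a"] by simp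
  then have "\<bar>(\<Sum>j=1..d. c j * x j) + c 0\<bar> \<le> real d * (e * a) + e"
    using assms(2) abs_triangle_ineq[of "\<Sum>j=1..d. c j * x j" "c 0"] by linarith
  also have "\<dots> = (real d * a + 1) * e"
    by (simp add: algebra_simps)
  also have "\<dots> \<le> C * e"
    using C_ge_input assms(2) by (intro mult_right_mono) auto
  finally show ?thesis .
qed

lemma preact_lipschitz:
  "Suc l \<le> L \<Longrightarrow> k \<in> {1..K} \<Longrightarrow> i \<in> {1..r} \<Longrightarrow>
     \<bar>nn_preact d r w1 x l k i - nn_preact d r w2 x l k i\<bar> \<le> C ^ Suc l * D"
proof (induction l arbitrary: i)
  case 0
  have "nn_preact d r w1 x 0 k i - nn_preact d r w2 x 0 k i =
      (\<Sum>j=1..d. (w1 (0, k, i, j) - w2 (0, k, i, j)) * x j) + (w1 (0, k, i, 0) - w2 (0, k, i, 0))"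
    by (simp add: sum_subtractf[symmetric] algebra_simps)
  also have "\<bar>\<dots>\<bar> \<le> C * D"
    using 0 by (intro abs_input_affine_le weight_dist in_nn_index_input) auto
  finally show ?case
    by simp
next
  case (Suc l)
  have "\<bar>w1 (Suc l, k, i, j) * nn_layer d r w1 x (Suc l) k j - w2 (Suc l, k, i, j) * nn_layer d r w2 x (Suc l) k j\<bar>
      \<le> D * 1 + B * (C ^ Suc l * D)" if j: "j \<in> {1..r}" for j
  proof (rule abs_mult_diff_le)
    show "\<bar>nn_layer d r w1 x (Suc l) k j - nn_layer d r w2 x (Suc l) k j\<bar> \<le> C ^ Suc l * D"
      unfolding nn_layer_Suc using Suc j by (meson Suc_leD order_trans sigmoid_lipschitz)
  qed (use Suc j in \<open>auto intro!: weight_dist in_nn_index_hidden hidden_bound abs_nn_layer_le_1\<close>)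
  moreover have "\<bar>w1 (Suc l, k, i, 0) - w2 (Suc l, k, i, 0)\<bar> \<le> D"
    using Suc by (intro weight_dist in_nn_index_hidden) auto
  moreover have "D \<le> C ^ Suc l * D"
    using C_power_mult_mono[of 0 "Suc l"] by simp
  ultimately have "\<bar>nn_preact d r w1 x (Suc l) k i - nn_preact d r w2 x (Suc l) k i\<bar>
      \<le> (2 * real r + 1) * B * (C ^ Suc l * D)"
    unfolding nn_preact.simps by (intro abs_affine_sum_diff_le B_ge_1) simp_all
  also have "\<dots> \<le> C * (C ^ Suc l * D)"
    using hidden_factor_le_C C_power_nonneg[of "Suc l"] D_nonneg by (intro mult_right_mono) auto
  finally show ?case
    by (simp add: algebra_simps)
qed

lemma layer_lipschitz:
  "Suc l \<le> L \<Longrightarrow> k \<in> {1..K} \<Longrightarrow> i \<in> {1..r} \<Longrightarrow>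
     \<bar>nn_layer d r w1 x (Suc l) k i - nn_layer d r w2 x (Suc l) k i\<bar> \<le> C ^ Suc l * D"
  unfolding nn_layer_Suc using preact_lipschitz sigmoid_lipschitz order_trans by blast

lemma preact_deriv_bound:
  "w \<in> {w1, w2} \<Longrightarrow> Suc l \<le> L \<Longrightarrow> k \<in> {1..K} \<Longrightarrow> i \<in> {1..r} \<Longrightarrow>
     \<bar>nn_preact_deriv d r idx w x l k i\<bar> \<le> C ^ Suc l"
proof (induction l arbitrary: i)
  case 0
  have "\<bar>nn_preact_deriv d r idx w x 0 k i\<bar> \<le> C * 1"
    unfolding nn_preact_deriv.simps by (intro abs_input_affine_le) simp_all
  then show ?case
    by simp
next
  case (Suc l)
  have "\<bar>of_bool ((Suc l, k, i, j) = idx) * nn_layer d r w x (Suc l) k j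
          + w (Suc l, k, i, j) * nn_layer_deriv d r idx w x l k j\<bar> \<le> 1 + B * C ^ Suc l"
    if j: "j \<in> {1..r}" for j
  proof -
    have "\<bar>of_bool ((Suc l, k, i, j) = idx) * nn_layer d r w x (Suc l) k j\<bar> \<le> 1"
      using abs_nn_layer_le_1 by (simp add: abs_mult)
    moreover have "\<bar>w (Suc l, k, i, j) * nn_layer_deriv d r idx w x l k j\<bar> \<le> B * C ^ Suc l"
      unfolding abs_mult[of "w _"] nn_layer_deriv_def using Suc j B_ge_1
      by (intro mult_mono hidden_bound abs_sigmoid'_mult_le Suc.IH) auto
    ultimately show ?thesis
      by (rule order_trans[OF abs_triangle_ineq add_mono])
  qed
  then have "\<bar>nn_preact_deriv d r idx w x (Suc l) k i\<bar> \<le> (2 * real r + 1) * B * C ^ Suc l"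
    unfolding nn_preact_deriv_Suc using one_le_C_power[of "Suc l"]
    by (intro abs_affine_sum_le B_ge_1) simp_all
  also have "\<dots> \<le> C * C ^ Suc l"
    using hidden_factor_le_C C_power_nonneg[of "Suc l"] by (intro mult_right_mono) auto
  finally show ?case
    by simp
qed

lemma layer_deriv_bound:
  "w \<in> {w1, w2} \<Longrightarrow> Suc l \<le> L \<Longrightarrow> k \<in> {1..K} \<Longrightarrow> i \<in> {1..r} \<Longrightarrow>
     \<bar>nn_layer_deriv d r idx w x l k i\<bar> \<le> C ^ Suc l"
  unfolding nn_layer_deriv_def by (intro abs_sigmoid'_mult_le preact_deriv_bound)

lemma layer_deriv_diff_le:
  assumes "Suc l \<le> L" "k \<in> {1..K}" "i \<in> {1..r}"
    and "\<bar>nn_preact_deriv d r idx w1 x l k i - nn_preact_deriv d r idx w2 x l k i\<bar> \<le> E"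
  shows "\<bar>nn_layer_deriv d r idx w1 x l k i - nn_layer_deriv d r idx w2 x l k i\<bar> \<le> C ^ (2 * Suc l) * D + E"
proof -
  have "\<bar>nn_layer_deriv d r idx w1 x l k i - nn_layer_deriv d r idx w2 x l k i\<bar>
      \<le> C ^ Suc l * D * C ^ Suc l + 1 * E"
    unfolding nn_layer_deriv_def using assms
    by (intro abs_mult_diff_le abs_sigmoid'_le_1 preact_deriv_bound order_trans[OF sigmoid'_lipschitz]
        preact_lipschitz) auto
  also have "\<dots> = C ^ (2 * Suc l) * D + E"
    by (simp only: mult_2 power_add) (simp add: algebra_simps)
  finally show ?thesis .
qed

lemma preact_deriv_lipschitz:
  "Suc l \<le> L \<Longrightarrow> k \<in> {1..K} \<Longrightarrow> i \<in> {1..r} \<Longrightarrow>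
     \<bar>nn_preact_deriv d r idx w1 x l k i - nn_preact_deriv d r idx w2 x l k i\<bar> \<le> C ^ (2 * l + 1) * D"
proof (induction l arbitrary: i)
  case 0
  \<comment> \<open>the input layer's derivative does not depend on the weights\<close>
  show ?case
    using one_le_C D_nonneg by simp
next
  case (Suc l)
  have summand_diff:
    "\<bar>(of_bool ((Suc l, k, i, j) = idx) * nn_layer d r w1 x (Suc l) k j
         + w1 (Suc l, k, i, j) * nn_layer_deriv d r idx w1 x l k j)
      - (of_bool ((Suc l, k, i, j) = idx) * nn_layer d r w2 x (Suc l) k j
         + w2 (Suc l, k, i, j) * nn_layer_deriv d r idx w2 x l k j)\<bar>
     \<le> 2 * C ^ Suc l * D + B * (2 * C ^ (2 * Suc l) * D)" if j: "j \<in> {1..r}" for j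
  proof -
    have "\<bar>of_bool ((Suc l, k, i, j) = idx) * nn_layer d r w1 x (Suc l) k j
           - of_bool ((Suc l, k, i, j) = idx) * nn_layer d r w2 x (Suc l) k j\<bar> \<le> C ^ Suc l * D"
      unfolding right_diff_distrib[symmetric] abs_mult using Suc j layer_lipschitz[of l k j]
      by (simp add: mult_le_one order_trans[OF mult_left_le_one_le])
    moreover have "\<bar>w1 (Suc l, k, i, j) * nn_layer_deriv d r idx w1 x l k j
           - w2 (Suc l, k, i, j) * nn_layer_deriv d r idx w2 x l k j\<bar>
        \<le> D * C ^ Suc l + B * (2 * C ^ (2 * Suc l) * D)"
    proof -
      have "\<bar>w1 (Suc l, k, i, j) * nn_layer_deriv d r idx w1 x l k j
             - w2 (Suc l, k, i, j) * nn_layer_deriv d r idx w2 x l k j\<bar>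
          \<le> D * C ^ Suc l + B * (C ^ (2 * Suc l) * D + C ^ (2 * l + 1) * D)"
        using Suc j by (intro abs_mult_diff_le weight_dist in_nn_index_hidden layer_deriv_bound
            hidden_bound layer_deriv_diff_le Suc.IH) auto
      also have "\<dots> \<le> D * C ^ Suc l + B * (2 * C ^ (2 * Suc l) * D)"
      proof -
        have "C ^ (2 * l + 1) * D \<le> C ^ (2 * Suc l) * D"
          by (rule C_power_mult_mono) simp
        then show ?thesis
          using B_ge_1 by (intro add_left_mono mult_left_mono) linarith+
      qed
      finally show ?thesis .
    qed
    ultimately show ?thesis
      by (rule abs_add_diff_le) simp
  qed
  have "\<bar>nn_preact_deriv d r idx w1 x (Suc l) k i - nn_preact_deriv d r idx w2 x (Suc l) k i\<bar>
      \<le> (2 * real r + 1) * B * (2 * C ^ (2 * Suc l) * D)"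
    unfolding nn_preact_deriv_Suc using C_power_mult_mono[of "Suc l" "2 * Suc l"] C_power_nonneg[of "Suc l"] D_nonneg
    by (intro abs_affine_sum_diff_le[OF B_ge_1 summand_diff]) simp_all
  also have "\<dots> = 2 * (2 * real r + 1) * B * (C ^ (2 * Suc l) * D)"
    by simp
  also have "\<dots> \<le> C * (C ^ (2 * Suc l) * D)"
    using C_ge_hidden C_power_nonneg[of "2 * Suc l"] D_nonneg by (intro mult_right_mono) auto
  finally show ?case
    by (simp add: algebra_simps)
qed

lemma layer_deriv_lipschitz:
  assumes "Suc l \<le> L" "k \<in> {1..K}" "i \<in> {1..r}"
  shows "\<bar>nn_layer_deriv d r idx w1 x l k i - nn_layer_deriv d r idx w2 x l k i\<bar> \<le> 2 * C ^ (2 * Suc l) * D"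
proof -
  have "C ^ (2 * l + 1) * D \<le> C ^ (2 * Suc l) * D"
    by (rule C_power_mult_mono) simp
  then show ?thesis
    using layer_deriv_diff_le[OF assms preact_deriv_lipschitz[OF assms], where idx = idx] by linarith
qed

end

locale bounded_net_pair = bounded_weight_pair +
  fixes gamma :: real
  assumes L_pos: "1 \<le> L" and r_pos: "1 \<le> r" and gamma_ge_1: "1 \<le> gamma"
    and output_bound: "\<And>w k. w \<in> {w1, w2} \<Longrightarrow> k \<in> {1..K} \<Longrightarrow> \<bar>w (L, 1, 1, k)\<bar> \<le> gamma"
begin

lemma top_layer_lipschitz:
  "k \<in> {1..K} \<Longrightarrow> \<bar>nn_layer d r w1 x L k 1 - nn_layer d r w2 x L k 1\<bar> \<le> C ^ L * D"
  using layer_lipschitz[of "L - 1" k 1] L_pos r_pos by simp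

lemma top_layer_deriv_bound:
  "w \<in> {w1, w2} \<Longrightarrow> k \<in> {1..K} \<Longrightarrow> \<bar>nn_layer_deriv d r idx w x (L - 1) k 1\<bar> \<le> C ^ L"
  using layer_deriv_bound[of w "L - 1" k 1] L_pos r_pos by simp

lemma top_layer_deriv_lipschitz:
  "k \<in> {1..K} \<Longrightarrow>
     \<bar>nn_layer_deriv d r idx w1 x (L - 1) k 1 - nn_layer_deriv d r idx w2 x (L - 1) k 1\<bar> \<le> 2 * C ^ (2 * L) * D"
  using layer_deriv_lipschitz[of "L - 1" k 1] L_pos r_pos by simp

lemma one_le_gamma_C_power: "1 \<le> gamma * C ^ n"
  using mult_mono[OF gamma_ge_1 one_le_C_power[of n]] gamma_ge_1 by simp

lemma abs_nn_net_le:
  assumes "w \<in> {w1, w2}"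
  shows "\<bar>nn_net d L r K w x\<bar> \<le> real K * gamma"
proof -
  have "\<bar>w (L, 1, 1, k) * nn_layer d r w x L k 1\<bar> \<le> gamma * 1" if "k \<in> {1..K}" for k
    unfolding abs_mult using assms that gamma_ge_1 by (intro mult_mono output_bound abs_nn_layer_le_1) auto
  then show ?thesis
    unfolding nn_net_def using abs_sum_le_card_mult[of "{1..K}"] by simp
qed

lemma nn_net_lipschitz: "\<bar>nn_net d L r K w1 x - nn_net d L r K w2 x\<bar> \<le> real K * (2 * gamma * C ^ L * D)"
proof -
  have "\<bar>w1 (L, 1, 1, k) * nn_layer d r w1 x L k 1 - w2 (L, 1, 1, k) * nn_layer d r w2 x L k 1\<bar>
      \<le> 2 * gamma * C ^ L * D" if k: "k \<in> {1..K}" for k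
  proof -
    have "\<bar>w1 (L, 1, 1, k) * nn_layer d r w1 x L k 1 - w2 (L, 1, 1, k) * nn_layer d r w2 x L k 1\<bar>
        \<le> D * 1 + gamma * (C ^ L * D)"
      using k by (intro abs_mult_diff_le weight_dist in_nn_index_output abs_nn_layer_le_1 output_bound
          top_layer_lipschitz) simp_all
    also have "\<dots> \<le> 2 * gamma * C ^ L * D"
      using mult_right_mono[OF one_le_gamma_C_power D_nonneg, of L] by (simp add: algebra_simps)
    finally show ?thesis .
  qed
  then show ?thesis
    unfolding nn_net_def sum_subtractf[symmetric] using abs_sum_le_card_mult[of "{1..K}"] by simp
qed

lemma abs_nn_net_deriv_le:
  assumes "w \<in> {w1, w2}"
  shows "\<bar>nn_net_deriv d L r K idx w x\<bar> \<le> 2 * gamma * C ^ L"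
proof -
  obtain p q s t where idx: "idx = (p, q, s, t)"
    by (cases idx)
  have "\<bar>\<Sum>k=1..K. of_bool ((L, 1, 1, k) = idx) * nn_layer d r w x L k 1\<bar> \<le> 1"
    by (rule abs_sum_le_single[where q = t]) (auto simp: idx abs_nn_layer_le_1)
  moreover have "\<bar>\<Sum>k=1..K. w (L, 1, 1, k) * nn_layer_deriv d r idx w x (L - 1) k 1\<bar> \<le> gamma * C ^ L"
  proof (rule abs_sum_le_single[where q = q])
    show "\<bar>w (L, 1, 1, q) * nn_layer_deriv d r idx w x (L - 1) q 1\<bar> \<le> gamma * C ^ L" if "q \<in> {1..K}"
      unfolding abs_mult[of "w _"] using assms that gamma_ge_1
      by (intro mult_mono output_bound top_layer_deriv_bound) auto
  qed (use gamma_ge_1 C_power_nonneg in \<open>auto simp: idx nn_layer_deriv_def nn_preact_deriv_other_subnet\<close>)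
  ultimately have "\<bar>nn_net_deriv d L r K idx w x\<bar> \<le> 1 + gamma * C ^ L"
    unfolding nn_net_deriv_def by (rule order_trans[OF abs_triangle_ineq add_mono])
  then show ?thesis
    using one_le_gamma_C_power[of L] by linarith
qed

lemma nn_net_deriv_lipschitz:
  "\<bar>nn_net_deriv d L r K idx w1 x - nn_net_deriv d L r K idx w2 x\<bar> \<le> 4 * gamma * C ^ (2 * L) * D"
proof -
  obtain p q s t where idx: "idx = (p, q, s, t)"
    by (cases idx)
  have "C ^ L * D \<le> gamma * (C ^ (2 * L) * D)"
    using C_power_mult_mono[of L "2 * L"] mult_right_mono[OF gamma_ge_1, of "C ^ (2 * L) * D"]
      C_power_nonneg D_nonneg by simp
  then have total: "C ^ L * D + (D * C ^ L + gamma * (2 * C ^ (2 * L) * D)) \<le> 4 * gamma * C ^ (2 * L) * D"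
    by (simp add: algebra_simps)
  have "\<bar>(\<Sum>k=1..K. of_bool ((L, 1, 1, k) = idx) * nn_layer d r w1 x L k 1)
          - (\<Sum>k=1..K. of_bool ((L, 1, 1, k) = idx) * nn_layer d r w2 x L k 1)\<bar> \<le> C ^ L * D"
    unfolding sum_subtractf[symmetric]
  proof (rule abs_sum_le_single[where q = t])
    show "\<bar>of_bool ((L, 1, 1, t) = idx) * nn_layer d r w1 x L t 1
           - of_bool ((L, 1, 1, t) = idx) * nn_layer d r w2 x L t 1\<bar> \<le> C ^ L * D" if "t \<in> {1..K}"
      using top_layer_lipschitz[OF that] C_power_mult_mono[of 0 L] D_nonneg by simp
  qed (use C_power_nonneg D_nonneg in \<open>auto simp: idx\<close>)
  moreover have "\<bar>(\<Sum>k=1..K. w1 (L, 1, 1, k) * nn_layer_deriv d r idx w1 x (L - 1) k 1)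
          - (\<Sum>k=1..K. w2 (L, 1, 1, k) * nn_layer_deriv d r idx w2 x (L - 1) k 1)\<bar>
      \<le> D * C ^ L + gamma * (2 * C ^ (2 * L) * D)"
    unfolding sum_subtractf[symmetric]
  proof (rule abs_sum_le_single[where q = q])
    show "\<bar>w1 (L, 1, 1, q) * nn_layer_deriv d r idx w1 x (L - 1) q 1
           - w2 (L, 1, 1, q) * nn_layer_deriv d r idx w2 x (L - 1) q 1\<bar>
        \<le> D * C ^ L + gamma * (2 * C ^ (2 * L) * D)" if "q \<in> {1..K}"
      using that by (intro abs_mult_diff_le weight_dist in_nn_index_output top_layer_deriv_bound output_bound
          top_layer_deriv_lipschitz) auto
  qed (use D_nonneg gamma_ge_1 C_power_nonneg in
        \<open>auto simp: idx nn_layer_deriv_def nn_preact_deriv_other_subnet\<close>)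
  ultimately show ?thesis
    unfolding nn_net_deriv_def by (rule abs_add_diff_le[OF _ _ total])
qed

lemma squared_loss_deriv_lipschitz:
  assumes "\<bar>y\<bar> \<le> real K * gamma"
  shows "\<bar>(nn_net d L r K w1 x - y) * nn_net_deriv d L r K idx w1 x
           - (nn_net d L r K w2 x - y) * nn_net_deriv d L r K idx w2 x\<bar>
         \<le> 12 * real K * gamma\<^sup>2 * C ^ (2 * L) * D"
proof -
  have "\<bar>nn_net d L r K w2 x - y\<bar> \<le> 2 * real K * gamma"
    using abs_nn_net_le[of w2] assms abs_triangle_ineq4[of "nn_net d L r K w2 x" y] by simp
  then have "\<bar>(nn_net d L r K w1 x - y) * nn_net_deriv d L r K idx w1 x
               - (nn_net d L r K w2 x - y) * nn_net_deriv d L r K idx w2 x\<bar>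
      \<le> real K * (2 * gamma * C ^ L * D) * (2 * gamma * C ^ L)
        + 2 * real K * gamma * (4 * gamma * C ^ (2 * L) * D)"
    using nn_net_lipschitz by (intro abs_mult_diff_le abs_nn_net_deriv_le nn_net_deriv_lipschitz) simp_all
  also have "\<dots> = 12 * real K * gamma\<^sup>2 * C ^ (2 * L) * D"
    unfolding mult_2[of L] power_add by (simp add: power2_eq_square algebra_simps)
  finally show ?thesis .
qed

end

lemma abs_grad_emp_risk_diff_le:
  assumes "1 \<le> n" and net: "\<And>i. i \<in> {1..n} \<Longrightarrow> bounded_net_pair d L r K a B C D (X i) w1 w2 gamma"
    and Y: "\<And>i. i \<in> {1..n} \<Longrightarrow> \<bar>Y i\<bar> \<le> real K * gamma"
  shows "\<bar>grad_w (emp_risk d L r K n X Y) w1 idx - grad_w (emp_risk d L r K n X Y) w2 idx\<bar>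
           \<le> 24 * real K * gamma\<^sup>2 * C ^ (2 * L) * D"
proof -
  have L: "1 \<le> L"
    using bounded_net_pair.L_pos[OF net, of 1] assms(1) by simp
  have "\<bar>\<Sum>i=1..n. (nn_net d L r K w1 (X i) - Y i) * nn_net_deriv d L r K idx w1 (X i)
                 - (nn_net d L r K w2 (X i) - Y i) * nn_net_deriv d L r K idx w2 (X i)\<bar>
      \<le> real (card {1..n}) * (12 * real K * gamma\<^sup>2 * C ^ (2 * L) * D)"
    by (intro abs_sum_le_card_mult bounded_net_pair.squared_loss_deriv_lipschitz[of d L r K a B] net Y)
  then show ?thesis
    using assms(1)
    unfolding grad_emp_risk[OF L] right_diff_distrib[symmetric] sum_subtractf[symmetric] abs_mult
    by (simp add: field_simps)
qed

lemma network_constant_ge: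
  assumes "1 \<le> a" and "1 \<le> B"
  shows "real d * a + 1 \<le> 2 * (real d + 2 * real r + 1) * a * B"
    and "2 * (2 * real r + 1) * B \<le> 2 * (real d + 2 * real r + 1) * a * B"
proof -
  have aB: "1 \<le> a * B"
    using assms mult_mono[of 1 a 1 B] by simp
  have "real d * a \<le> real d * (a * B)"
    using mult_left_mono[OF assms(2), of a] assms(1) by (intro mult_left_mono) auto
  then have "real d * a + 1 \<le> (real d + 1) * (a * B)"
    using aB by (simp add: algebra_simps)
  also have "\<dots> \<le> 2 * (real d + 2 * real r + 1) * (a * B)"
    using aB by (intro mult_right_mono) auto
  finally show "real d * a + 1 \<le> 2 * (real d + 2 * real r + 1) * a * B"
    by (simp add: mult.assoc)
  have "2 * (2 * real r + 1) * B \<le> 2 * (real d + 2 * real r + 1) * B"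
    using assms(2) by (intro mult_right_mono) auto
  also have "\<dots> \<le> 2 * (real d + 2 * real r + 1) * B * a"
    using mult_left_mono[OF assms(1), of "2 * (real d + 2 * real r + 1) * B"] assms(2) by simp
  finally show "2 * (2 * real r + 1) * B \<le> 2 * (real d + 2 * real r + 1) * a * B"
    by (simp add: algebra_simps)
qed

lemma bounded_net_pairI:
  assumes "1 \<le> L" "1 \<le> r" "1 \<le> a" "1 \<le> B" "1 \<le> gamma" and "\<forall>j\<in>{1..d}. \<bar>x j\<bar> \<le> a"
    and "\<forall>k\<in>{1..K}. max \<bar>w1 (L, 1, 1, k)\<bar> \<bar>w2 (L, 1, 1, k)\<bar> \<le> gamma"
    and "\<forall>l\<in>{1..L-1}. \<forall>k\<in>{1..K}. \<forall>i\<in>{1..r}. \<forall>j\<in>{0..r}. max \<bar>w1 (l, k, i, j)\<bar> \<bar>w2 (l, k, i, j)\<bar> \<le> B"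
  shows "bounded_net_pair d L r K a B (2 * (real d + 2 * real r + 1) * a * B)
           (wnorm (nn_index d L r K) (\<lambda>idx. w1 idx - w2 idx)) x w1 w2 gamma"
  using assms network_constant_ge[OF assms(3,4), where d = d and r = r] wnorm_nonneg
    abs_le_wnorm[OF finite_nn_index, of _ d L r K "\<lambda>idx. w1 idx - w2 idx"]
  by unfold_locales auto

lemma powr_three_halves: "0 \<le> x \<Longrightarrow> x powr (3 / 2) = x * sqrt x"
  using powr_add[of x 1 "1 / 2"] by (cases "x = 0") (simp_all add: powr_half_sqrt)

theorem lemma5:
  fixes d L r :: nat and a :: real
  assumes "d \<ge> 1" and "L \<ge> 1" and "r \<ge> 1" and "a \<ge> 1"
  shows "\<exists>c15 > 0. \<forall>(K::nat) (n::nat) (beta::real) (gamma::real) (B::real)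
            (X :: nat \<Rightarrow> nat \<Rightarrow> real) (Y :: nat \<Rightarrow> real) (w1::weights) (w2::weights).
     n \<ge> 1 \<and> K \<ge> 1 \<and> gamma \<ge> 1 \<and> B \<ge> 1 \<and> beta > 0
     \<and> (\<forall>i\<in>{1..n}. (\<forall>j\<in>{1..d}. \<bar>X i j\<bar> \<le> a) \<and> \<bar>Y i\<bar> \<le> beta)
     \<and> real K * gamma \<ge> beta
     \<and> (\<forall>k\<in>{1..K}. max \<bar>w1 (L, 1, 1, k)\<bar> \<bar>w2 (L, 1, 1, k)\<bar> \<le> gamma)
     \<and> (\<forall>l\<in>{1..L-1}. \<forall>k\<in>{1..K}. \<forall>i\<in>{1..r}. \<forall>j\<in>{0..r}.
           max \<bar>w1 (l, k, i, j)\<bar> \<bar>w2 (l, k, i, j)\<bar> \<le> B)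
     \<longrightarrow> wnorm (nn_index d L r K)
           (\<lambda>idx. grad_w (emp_risk d L r K n X Y) w1 idx - grad_w (emp_risk d L r K n X Y) w2 idx)
         \<le> c15 * real K powr (3/2) * B ^ (2 * L) * gamma^2
             * wnorm (nn_index d L r K) (\<lambda>idx. w1 idx - w2 idx)"
proof -
  define Q where "Q = 2 * (real d + 2 * real r + 1) * a"
  define c0 where "c0 = real (r * (d + 1) + (L - 1) * r * (r + 1) + 1)"
  have Q_pos: "0 < Q"
    using assms(4) by (simp add: Q_def add_pos_nonneg)
  moreover have "1 \<le> c0"
    by (simp add: c0_def)
  ultimately have c15_pos: "0 < 24 * sqrt c0 * Q ^ (2 * L)"
    by simp
  show ?thesis
  proof (intro exI[of _ "24 * sqrt c0 * Q ^ (2 * L)"] conjI allI impI c15_pos, goal_cases)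
    case (1 K n beta gamma B X Y w1 w2)
    define D where "D = wnorm (nn_index d L r K) (\<lambda>idx. w1 idx - w2 idx)"
    define M where "M = 24 * real K * gamma\<^sup>2 * (Q * B) ^ (2 * L) * D"
    have net: "bounded_net_pair d L r K a B (Q * B) D (X i) w1 w2 gamma" if "i \<in> {1..n}" for i
      unfolding Q_def D_def using 1 that assms by (intro bounded_net_pairI) auto
    have Y: "\<bar>Y i\<bar> \<le> real K * gamma" if "i \<in> {1..n}" for i
      using 1 that by (blast intro: order_trans)
    have "wnorm (nn_index d L r K)
           (\<lambda>idx. grad_w (emp_risk d L r K n X Y) w1 idx - grad_w (emp_risk d L r K n X Y) w2 idx)
        \<le> sqrt (real (card (nn_index d L r K))) * M"
      unfolding M_def using 1 net Y
      by (intro wnorm_le_sqrt_card_mult abs_grad_emp_risk_diff_le[where a = a and B = B]) auto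
    also have "\<dots> \<le> sqrt (c0 * real K) * M"
      using card_nn_index_le[of d L r K] Q_pos 1 wnorm_nonneg unfolding c0_def M_def D_def
      by (intro mult_right_mono real_sqrt_le_mono) (simp_all only: of_nat_mult[symmetric] of_nat_le_iff, simp)
    also have "\<dots> = 24 * sqrt c0 * Q ^ (2 * L) * real K powr (3 / 2) * B ^ (2 * L) * gamma\<^sup>2 * D"
      unfolding M_def by (simp add: powr_three_halves real_sqrt_mult algebra_simps)
    finally show ?case
      unfolding D_def .
  qed
qed

end
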